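(* Let $\mathcal{D}$ be a distribution on $\mathbb{R}^d\times\mathbb{R}$ with $\|\mathbf{x}\|_2\le1$ and $|y|\le B$ almost surely. The GAERR algorithm (with any sampling distribution $(q_1,\dots,q_d)$ and budget $k$) generates gradient estimates satisfying, for all $t$, $$\mathbb{E}_{\mathcal{D},A}\big[\|\widetilde{\mathbf{g}}_t\|_2^2\big]\le 4B^2\Big(\frac1k\mathbb{E}_{\mathcal{D},A}\big[\|\widetilde{\mathbf{x}}_{t,r}\|_2^2\big]+1\Big).$$
   Context: Algorithm GAERR (parameters $B,\eta>0$, probabilities $q_i$ summing to $1$, integer budget $k>0$; i.i.d. examples $(\mathbf{x}_t,y_t)\sim\mathcal{D}$): initialize $\mathbf{w}_1\ne0$, $\|\mathbf{w}_1\|_2\le B$. For each $t$: for $r=1..k$ draw $i_{t,r}$ with probability $q_{i_{t,r}}$ and set $\widetilde{\mathbf{x}}_{t,r}=\frac{1}{q_{i_{t,r}}}\mathbf{x}_t[i_{t,r}]\mathbf{e}_{i_{t,r}}$ (the $\widetilde{\mathbf{x}}_{t,r}$, $r=1..k$, are identically distributed); $\widetilde{\mathbf{x}}_t=\frac1k\sum_r\widetilde{\mathbf{x}}_{t,r}$; draw $j_t$ with probability $p_j=w_{t,j}^2/\|\mathbf{w}_t\|_2^2$ and set $\widetilde\phi_t=\frac{w_{t,j_t}}{p_{j_t}}\mathbf{x}_t[j_t]-y_t$; $\widetilde{\mathbf{g}}_t=\widetilde\phi_t\widetilde{\mathbf{x}}_t$; $\mathbf{v}_t=\mathbf{w}_t-\eta\widetilde{\mathbf{g}}_t$;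 $\mathbf{w}_{t+1}=\mathbf{v}_tB/\max\{\|\mathbf{v}_t\|_2,B\}$. All draws independent. $\mathbb{E}_{\mathcal{D},A}$ is expectation over examples and algorithm randomness. *)

theory Defs
  imports "HOL-Analysis.Analysis" "HOL-Probability.Probability"
begin

text \<open>GAERR, vectors in R^d modelled as real^'d with a finite index type 'd.
  The sampling distribution (q_1,...,q_d) is a pmf Q on 'd, q_i = pmf Q i.\<close>

definition xt_r :: "'d::finite pmf \<Rightarrow> real^'d \<Rightarrow> 'd \<Rightarrow> real^'d" where
  "xt_r Q x i = ((1 / pmf Q i) * x $ i) *\<^sub>R axis i 1"

definition xt :: "'d::finite pmf \<Rightarrow> nat \<Rightarrow> real^'d \<Rightarrow> (nat \<Rightarrow> 'd) \<Rightarrow> real^'d" where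
  "xt Q k x I = (1 / real k) *\<^sub>R (\<Sum>r<k. xt_r Q x (I r))"

definition pj :: "real^'d::finite \<Rightarrow> 'd \<Rightarrow> real" where
  "pj w j = (w $ j)^2 / (norm w)^2"

definition jdist :: "real^'d::finite \<Rightarrow> 'd pmf" where
  "jdist w = embed_pmf (pj w)"

definition phi_t :: "real^'d::finite \<Rightarrow> real^'d \<Rightarrow> real \<Rightarrow> 'd \<Rightarrow> real" where
  "phi_t w x y j = (w $ j / pj w j) * x $ j - y"

definition g_t :: "'d::finite pmf \<Rightarrow> nat \<Rightarrow> real^'d \<Rightarrow> real^'d \<Rightarrow> real \<Rightarrow> (nat \<Rightarrow> 'd) \<Rightarrow> 'd \<Rightarrow> real^'d" where
  "g_t Q k w x y I j = phi_t w x y j *\<^sub>R xt Q k x I"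

text \<open>the k index draws i_{t,1..k} (0-based: r < k), i.i.d. with law Q\<close>
definition idx_pmf :: "'d::finite pmf \<Rightarrow> nat \<Rightarrow> (nat \<Rightarrow> 'd) pmf" where
  "idx_pmf Q k = Pi_pmf {..<k} undefined (\<lambda>_. Q)"

text \<open>all algorithm randomness of one round, given w_t: the indices and j_t, independent\<close>
definition alg_pmf :: "'d::finite pmf \<Rightarrow> nat \<Rightarrow> real^'d \<Rightarrow> ((nat \<Rightarrow> 'd) \<times> 'd) pmf" where
  "alg_pmf Q k w = pair_pmf (idx_pmf Q k) (jdist w)"

definition next_w :: "real \<Rightarrow> real \<Rightarrow> 'd::finite pmf \<Rightarrow> nat \<Rightarrow> real^'d \<Rightarrow> real^'d \<Rightarrow> real
    \<Rightarrow> (nat \<Rightarrow> 'd) \<Rightarrow> 'd \<Rightarrow> real^'d" where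
  "next_w B \<eta> Q k w x y I j =
     (let v = w - \<eta> *\<^sub>R g_t Q k w x y I j in (B / max (norm v) B) *\<^sub>R v)"

definition step :: "((real^'d) \<times> real) measure \<Rightarrow> 'd::finite pmf \<Rightarrow> nat \<Rightarrow> real \<Rightarrow> real
    \<Rightarrow> real^'d \<Rightarrow> (real^'d) measure" where
  "step D Q k \<eta> B w = Giry_Monad.bind D (\<lambda>(x, y).
      distr (measure_pmf (alg_pmf Q k w)) borel (\<lambda>(I, j). next_w B \<eta> Q k w x y I j))"

text \<open>w_law ... n is the law of the iterate w_{n+1}\<close>
primrec w_law :: "((real^'d) \<times> real) measure \<Rightarrow> 'd::finite pmf \<Rightarrow> nat \<Rightarrow> real \<Rightarrow> real
    \<Rightarrow> real^'d \<Rightarrow> nat \<Rightarrow> (real^'d) measure" where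
  "w_law D Q k \<eta> B w1 0 = return borel w1"
| "w_law D Q k \<eta> B w1 (Suc n) = Giry_Monad.bind (w_law D Q k \<eta> B w1 n) (step D Q k \<eta> B)"

end

theory Submission
  imports Defs
begin

text \<open>Given \<open>w\<^sub>t\<close>, the coordinate \<open>j\<^sub>t\<close> is independent of the indices \<open>i\<^sub>t\<^sub>,\<^sub>r\<close>, so
  \<open>E \<parallel>g\<^sub>t\<parallel>\<^sup>2 = E \<phi>\<^sub>t\<^sup>2 \<cdot> E \<parallel>x\<^sub>t\<parallel>\<^sup>2\<close>. Since \<open>w\<^sub>j/p\<^sub>j = \<parallel>w\<parallel>\<^sup>2/w\<^sub>j\<close>, we get
  \<open>E \<phi>\<^sub>t\<^sup>2 \<le> 2 \<parallel>w\<^sub>t\<parallel>\<^sup>2 \<parallel>x\<parallel>\<^sup>2 + 2 y\<^sup>2 \<le> 4 B\<^sup>2\<close>, where \<open>\<parallel>w\<^sub>t\<parallel> \<le> B\<close> because of the projection step.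
  The estimate \<open>x\<^sub>t\<close> is the mean of \<open>k\<close> i.i.d. copies of \<open>x\<^sub>t\<^sub>,\<^sub>r\<close>, whose mean has norm at most
  \<open>\<parallel>x\<parallel> \<le> 1\<close>, hence \<open>E \<parallel>x\<^sub>t\<parallel>\<^sup>2 = E \<parallel>x\<^sub>t\<^sub>,\<^sub>r\<parallel>\<^sup>2 / k + (1 - 1/k) \<parallel>E x\<^sub>t\<^sub>,\<^sub>r\<parallel>\<^sup>2 \<le> E \<parallel>x\<^sub>t\<^sub>,\<^sub>r\<parallel>\<^sup>2 / k + 1\<close>.\<close>

lemma integral_pair_pmf_finite:
  fixes F :: "'a \<times> 'b \<Rightarrow> real"
  assumes A: "finite (set_pmf A)" and B: "finite (set_pmf B)"
  shows "(\<integral>x. F x \<partial>pair_pmf A B) = (\<integral>a. (\<integral>b. F (a, b) \<partial>B) \<partial>A)"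
proof -
  have "(\<integral>x. F x \<partial>pair_pmf A B) = (\<Sum>x\<in>set_pmf A \<times> set_pmf B. F x * pmf (pair_pmf A B) x)"
    using A B by (intro integral_measure_pmf_real) auto
  also have "\<dots> = (\<Sum>a\<in>set_pmf A. \<Sum>b\<in>set_pmf B. F (a, b) * pmf B b * pmf A a)"
    unfolding sum.cartesian_product by (intro sum.cong refl) (auto simp: pmf_pair mult_ac)
  also have "\<dots> = (\<Sum>a\<in>set_pmf A. (\<integral>b. F (a, b) \<partial>B) * pmf A a)"
    using B by (intro sum.cong refl) (simp add: integral_measure_pmf_real[where A="set_pmf B"] sum_distrib_right)
  also have "\<dots> = (\<integral>a. (\<integral>b. F (a, b) \<partial>B) \<partial>A)"
    using A by (intro integral_measure_pmf_real[symmetric]) auto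
  finally show ?thesis .
qed

lemma finite_set_Pi_pmf_const:
  assumes "finite A" and "finite (set_pmf Q)"
  shows "finite (set_pmf (Pi_pmf A d (\<lambda>_. Q)))"
  using assms by (subst set_Pi_pmf) (auto intro!: finite_PiE_dflt)

lemma Pi_pmf_lessThan_Suc:
  "Pi_pmf {..<Suc n} d (\<lambda>_. Q) = map_pmf (\<lambda>(y, f). f(n := y)) (pair_pmf Q (Pi_pmf {..<n} d (\<lambda>_. Q)))"
  unfolding lessThan_Suc by (subst Pi_pmf_insert) auto

lemma integral_Pi_pmf_sum:
  fixes h :: "'a \<Rightarrow> real"
  assumes "finite (set_pmf Q)"
  shows "(\<integral>f. (\<Sum>r<n. h (f r)) \<partial>Pi_pmf {..<n} d (\<lambda>_. Q)) = real n * (\<integral>i. h i \<partial>Q)"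
proof -
  have "(\<integral>f. h (f r) \<partial>Pi_pmf {..<n} d (\<lambda>_. Q)) = (\<integral>i. h i \<partial>Q)" if "r < n" for r
  proof -
    have "(\<integral>f. h (f r) \<partial>Pi_pmf {..<n} d (\<lambda>_. Q)) = (\<integral>i. h i \<partial>map_pmf (\<lambda>f. f r) (Pi_pmf {..<n} d (\<lambda>_. Q)))"
      by simp
    also have "map_pmf (\<lambda>f. f r) (Pi_pmf {..<n} d (\<lambda>_. Q)) = Q"
      using that by (subst Pi_pmf_component) auto
    finally show ?thesis .
  qed
  then show ?thesis
    using assms by (simp add: Bochner_Integration.integral_sum integrable_measure_pmf_finite finite_set_Pi_pmf_const)
qed

lemma integral_Pi_pmf_sum_squared:
  fixes h :: "'a \<Rightarrow> real"
  assumes Q: "finite (set_pmf Q)"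
  shows "(\<integral>f. (\<Sum>r<n. h (f r))^2 \<partial>Pi_pmf {..<n} d (\<lambda>_. Q)) =
           real n * (\<integral>i. (h i)^2 \<partial>Q) + (real n * real n - real n) * (\<integral>i. h i \<partial>Q)^2"
proof (induction n)
  case 0
  then show ?case by simp
next
  case (Suc n)
  define P where "P = Pi_pmf {..<n} d (\<lambda>_. Q)"
  define S where "S = (\<lambda>f. \<Sum>r<n. h (f r))"
  define a where "a = (\<integral>i. h i \<partial>Q)"
  define b where "b = (\<integral>i. (h i)^2 \<partial>Q)"
  have P: "finite (set_pmf P)" unfolding P_def using Q by (rule finite_set_Pi_pmf_const[rotated]) simp
  have intP: "integrable (measure_pmf P) g" for g :: "_ \<Rightarrow> real"
    using P by (rule integrable_measure_pmf_finite)
  have intQ: "integrable (measure_pmf Q) g" for g :: "_ \<Rightarrow> real"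
    using Q by (rule integrable_measure_pmf_finite)
  have mean: "(\<integral>f. S f \<partial>P) = real n * a"
    unfolding S_def P_def a_def using Q by (rule integral_Pi_pmf_sum)
  have IH: "(\<integral>f. (S f)^2 \<partial>P) = real n * b + (real n * real n - real n) * a^2"
    using Suc.IH unfolding P_def S_def a_def b_def .
  have "(\<integral>f. (\<Sum>r<Suc n. h (f r))^2 \<partial>Pi_pmf {..<Suc n} d (\<lambda>_. Q))
      = (\<integral>y. (\<integral>f. (h y)^2 + 2 * h y * S f + (S f)^2 \<partial>P) \<partial>Q)"
    unfolding Pi_pmf_lessThan_Suc P_def[symmetric]
    by (simp add: integral_pair_pmf_finite[OF Q P] case_prod_beta S_def power2_sum add_ac mult_ac)
  also have "\<dots> = (\<integral>y. (h y)^2 + 2 * real n * a * h y + (real n * b + (real n * real n - real n) * a^2) \<partial>Q)"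
    by (intro Bochner_Integration.integral_cong refl)
       (simp add: Bochner_Integration.integral_add[OF intP intP] mean IH)
  also have "\<dots> = b + 2 * real n * a * a + (real n * b + (real n * real n - real n) * a^2)"
    by (simp add: Bochner_Integration.integral_add[OF intQ intQ] a_def b_def)
  also have "\<dots> = real (Suc n) * b + (real (Suc n) * real (Suc n) - real (Suc n)) * a^2"
    by (simp add: algebra_simps power2_eq_square)
  finally show ?case unfolding a_def b_def .
qed

lemma norm_vec_power2: "(norm (v :: real^'n))^2 = (\<Sum>c\<in>UNIV. (v $ c)^2)"
  unfolding norm_vec_def L2_set_def by (simp add: sum_nonneg)

lemma integral_measure_pmf_vec_nth:
  fixes h :: "'a \<Rightarrow> real^'n"
  assumes "finite (set_pmf Q)"
  shows "(\<integral>i. h i \<partial>Q) $ c = (\<integral>i. h i $ c \<partial>Q)"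
  using assms by (simp add: integral_measure_pmf[where A="set_pmf Q"] sum_component mult.commute)

lemma integral_norm_mean_Pi_pmf:
  fixes h :: "'a \<Rightarrow> real^'n"
  assumes Q: "finite (set_pmf Q)" and k: "k > 0"
  shows "(\<integral>I. (norm ((1 / real k) *\<^sub>R (\<Sum>r<k. h (I r))))^2 \<partial>Pi_pmf {..<k} d (\<lambda>_. Q))
       = (\<integral>i. (norm (h i))^2 \<partial>Q) / real k + (1 - 1 / real k) * (norm (\<integral>i. h i \<partial>Q))^2"
proof -
  let ?P = "Pi_pmf {..<k} d (\<lambda>_. Q)"
  have intP: "integrable (measure_pmf ?P) g" for g :: "_ \<Rightarrow> real"
    using Q by (intro integrable_measure_pmf_finite finite_set_Pi_pmf_const) auto
  have intQ: "integrable (measure_pmf Q) g" for g :: "_ \<Rightarrow> real"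
    using Q by (rule integrable_measure_pmf_finite)
  have "(\<integral>I. (norm ((1 / real k) *\<^sub>R (\<Sum>r<k. h (I r))))^2 \<partial>?P)
      = (\<Sum>c\<in>UNIV. (1 / real k)^2 * (\<integral>I. (\<Sum>r<k. h (I r) $ c)^2 \<partial>?P))"
  proof -
    have "(norm ((1 / real k) *\<^sub>R (\<Sum>r<k. h (I r))))^2 = (\<Sum>c\<in>UNIV. (1 / real k)^2 * (\<Sum>r<k. h (I r) $ c)^2)" for I
      unfolding norm_vec_power2 by (simp add: sum_component power_divide)
    then show ?thesis
      by (simp add: Bochner_Integration.integral_sum[OF intP])
  qed
  also have "\<dots> = (\<Sum>c\<in>UNIV. (\<integral>i. (h i $ c)^2 \<partial>Q) / real k + (1 - 1 / real k) * (\<integral>i. h i $ c \<partial>Q)^2)"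
  proof (intro sum.cong refl)
    fix c
    show "(1 / real k)^2 * (\<integral>I. (\<Sum>r<k. h (I r) $ c)^2 \<partial>?P)
        = (\<integral>i. (h i $ c)^2 \<partial>Q) / real k + (1 - 1 / real k) * (\<integral>i. h i $ c \<partial>Q)^2"
      unfolding integral_Pi_pmf_sum_squared[OF Q, where h="\<lambda>i. h i $ c"]
      using k by (simp add: field_simps power2_eq_square)
  qed
  also have "\<dots> = (\<integral>i. (norm (h i))^2 \<partial>Q) / real k + (1 - 1 / real k) * (norm (\<integral>i. h i \<partial>Q))^2"
    by (simp add: norm_vec_power2 integral_measure_pmf_vec_nth[OF Q] sum.distrib sum_divide_distrib
        sum_distrib_left Bochner_Integration.integral_sum[OF intQ])
  finally show ?thesis .
qed

lemma xt_r_nth: "xt_r Q x i $ c = (if c = i then x $ c / pmf Q c else 0)"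
  unfolding xt_r_def axis_def by simp

lemma norm_xt_r_power2: "(norm (xt_r Q x i))^2 = (x $ i / pmf Q i)^2"
proof -
  have "(\<lambda>c. (xt_r Q x i $ c)^2) = (\<lambda>c. if c = i then (x $ i / pmf Q i)^2 else 0)"
    by (auto simp: xt_r_nth)
  then show ?thesis
    unfolding norm_vec_power2 by (simp only:) simp
qed

lemma norm_integral_xt_r_le:
  fixes Q :: "'d::finite pmf"
  shows "norm (\<integral>i. xt_r Q x i \<partial>Q) \<le> norm x"
proof (rule norm_le_componentwise_cart)
  fix c
  have "(\<integral>i. xt_r Q x i \<partial>Q) $ c = (\<Sum>i\<in>UNIV. xt_r Q x i $ c * pmf Q i)"
    by (simp add: integral_measure_pmf_vec_nth integral_measure_pmf_real[where A=UNIV])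
  also have "\<dots> = x $ c / pmf Q c * pmf Q c"
  proof -
    have "(\<lambda>i. xt_r Q x i $ c * pmf Q i) = (\<lambda>i. if i = c then x $ c / pmf Q c * pmf Q c else 0)"
      by (auto simp: xt_r_nth)
    then show ?thesis by (simp only:) simp
  qed
  finally show "norm ((\<integral>i. xt_r Q x i \<partial>Q) $ c) \<le> norm (x $ c)"
    by (cases "pmf Q c = 0") auto
qed

lemma integral_norm_xt_power2_le:
  fixes Q :: "'d::finite pmf"
  assumes k: "k > 0" and x: "norm x \<le> 1"
  shows "(\<integral>I. (norm (xt Q k x I))^2 \<partial>idx_pmf Q k) \<le> (\<integral>i. (norm (xt_r Q x i))^2 \<partial>Q) / real k + 1"
proof -
  have "(norm (\<integral>i. xt_r Q x i \<partial>Q))^2 \<le> 1"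
    using norm_integral_xt_r_le[of Q x] x by (simp add: power_le_one order_trans[OF _ x])
  moreover have "0 \<le> 1 - 1 / real k" "1 - 1 / real k \<le> 1"
    using k by (auto simp: field_simps)
  ultimately have "(1 - 1 / real k) * (norm (\<integral>i. xt_r Q x i \<partial>Q))^2 \<le> 1"
    by (metis mult_le_one zero_le_power2)
  moreover have "(\<integral>I. (norm (xt Q k x I))^2 \<partial>idx_pmf Q k)
      = (\<integral>i. (norm (xt_r Q x i))^2 \<partial>Q) / real k + (1 - 1 / real k) * (norm (\<integral>i. xt_r Q x i \<partial>Q))^2"
    unfolding xt_def idx_pmf_def by (rule integral_norm_mean_Pi_pmf[OF _ k]) simp
  ultimately show ?thesis by linarith
qed

lemma sum_pj: "w \<noteq> 0 \<Longrightarrow> (\<Sum>j\<in>UNIV. pj w j) = 1"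
  unfolding pj_def by (simp add: sum_divide_distrib[symmetric] norm_vec_power2[symmetric])

lemma pmf_jdist: "w \<noteq> 0 \<Longrightarrow> pmf (jdist w) j = pj w j"
  unfolding jdist_def
  by (rule pmf_embed_pmf) (auto simp: pj_def nn_integral_count_space_finite sum_ennreal
      sum_pj[unfolded pj_def])

text \<open>No hypothesis on \<open>w\<close> is needed: if \<open>w $ j = 0\<close> then \<open>pj w j = 0\<close> and the left side is \<open>0\<close>.\<close>
lemma pj_mult_power2_le: "pj w j * (w $ j / pj w j * x $ j)^2 \<le> (norm w)^2 * (x $ j)^2"
  by (cases "w $ j = 0") (auto simp: pj_def field_simps power2_eq_square)

lemma nn_integral_jdist_phi_t_power2_le:
  fixes w x :: "real^'d::finite"
  assumes w: "norm w \<le> B" and x: "norm x \<le> 1" and y: "\<bar>y\<bar> \<le> B"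
  shows "(\<integral>\<^sup>+j. ennreal ((phi_t w x y j)^2) \<partial>jdist w) \<le> ennreal (4 * B^2)"
proof -
  have yB: "y^2 \<le> B^2"
    using y by (metis abs_le_square_iff abs_of_nonneg abs_ge_self order_trans abs_ge_zero)
  show ?thesis
  proof (cases "w = 0")
    case True
    then have "(\<integral>\<^sup>+j. ennreal ((phi_t w x y j)^2) \<partial>jdist w) = ennreal (y^2)"
      by (simp add: phi_t_def measure_pmf.emeasure_space_1)
    moreover have "y^2 \<le> 4 * B^2"
      using yB zero_le_power2[of B] by linarith
    ultimately show ?thesis
      by (simp add: ennreal_leI)
  next
    case False
    define a where "a = (\<lambda>j. w $ j / pj w j * x $ j)"
    have "(\<integral>\<^sup>+j. ennreal ((phi_t w x y j)^2) \<partial>jdist w) = ennreal (\<Sum>j\<in>UNIV. pj w j * (a j - y)^2)"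
      using False
      by (subst nn_integral_measure_pmf_support[where A=UNIV])
         (auto simp: pmf_jdist phi_t_def a_def ennreal_mult[symmetric] pj_def mult.commute)
    also have "\<dots> \<le> ennreal (4 * B^2)"
    proof (rule ennreal_leI)
      have pj_nonneg: "0 \<le> pj w j" for j
        unfolding pj_def by simp
      have "(\<Sum>j\<in>UNIV. pj w j * (a j - y)^2) \<le> (\<Sum>j\<in>UNIV. 2 * (pj w j * (a j)^2) + 2 * y^2 * pj w j)"
      proof (rule sum_mono)
        fix j
        have "(a j - y)^2 \<le> 2 * (a j)^2 + 2 * y^2"
          using zero_le_power2[of "a j + y"] by (simp add: power2_eq_square algebra_simps)
        then show "pj w j * (a j - y)^2 \<le> 2 * (pj w j * (a j)^2) + 2 * y^2 * pj w j"
          using mult_left_mono[OF _ pj_nonneg[of j]] by (fastforce simp: algebra_simps)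
      qed
      also have "\<dots> = 2 * (\<Sum>j\<in>UNIV. pj w j * (a j)^2) + 2 * y^2"
        using sum_pj[OF False] by (simp add: sum.distrib sum_distrib_left[symmetric])
      also have "\<dots> \<le> 2 * (B^2 * 1) + 2 * B^2"
      proof -
        have "(\<Sum>j\<in>UNIV. pj w j * (a j)^2) \<le> (\<Sum>j\<in>UNIV. (norm w)^2 * (x $ j)^2)"
          unfolding a_def by (rule sum_mono pj_mult_power2_le)+
        also have "\<dots> = (norm w)^2 * (norm x)^2"
          by (simp add: norm_vec_power2[of x] sum_distrib_left)
        also have "\<dots> \<le> B^2 * 1"
          using w x by (intro mult_mono power_mono) (auto simp: power_le_one)
        finally show ?thesis
          using yB by linarith
      qed
      finally show "(\<Sum>j\<in>UNIV. pj w j * (a j - y)^2) \<le> 4 * B^2" by simp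
    qed
    finally show ?thesis .
  qed
qed

lemma nn_integral_alg_pmf_xt_r:
  assumes "r < k"
  shows "(\<integral>\<^sup>+a. ennreal ((norm (xt_r Q x (fst a r)))^2) \<partial>alg_pmf Q k w)
       = (\<integral>\<^sup>+i. ennreal ((norm (xt_r Q x i))^2) \<partial>Q)"
proof -
  have "(\<integral>\<^sup>+a. ennreal ((norm (xt_r Q x (fst a r)))^2) \<partial>alg_pmf Q k w)
      = (\<integral>\<^sup>+i. ennreal ((norm (xt_r Q x i))^2) \<partial>map_pmf (\<lambda>I. I r) (idx_pmf Q k))"
    unfolding alg_pmf_def nn_integral_pair_pmf' by (simp add: measure_pmf.emeasure_space_1)
  also have "map_pmf (\<lambda>I. I r) (idx_pmf Q k) = Q"
    unfolding idx_pmf_def using assms by (subst Pi_pmf_component) auto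
  finally show ?thesis .
qed

lemma nn_integral_norm_g_t_power2_le:
  fixes Q :: "'d::finite pmf" and w x :: "real^'d"
  assumes w: "norm w \<le> B" and x: "norm x \<le> 1" and y: "\<bar>y\<bar> \<le> B" and k: "k > 0"
  shows "(\<integral>\<^sup>+a. ennreal ((norm (g_t Q k w x y (fst a) (snd a)))^2) \<partial>alg_pmf Q k w)
     \<le> ennreal (4 * B^2) * ((\<integral>\<^sup>+i. ennreal ((norm (xt_r Q x i))^2) \<partial>Q) / ennreal (real k) + 1)"
proof -
  have idx: "finite (set_pmf (idx_pmf Q k))"
    unfolding idx_pmf_def by (rule finite_set_Pi_pmf_const) auto
  have "(\<integral>\<^sup>+a. ennreal ((norm (g_t Q k w x y (fst a) (snd a)))^2) \<partial>alg_pmf Q k w)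
      = (\<integral>\<^sup>+I. ennreal ((norm (xt Q k x I))^2) * (\<integral>\<^sup>+j. ennreal ((phi_t w x y j)^2) \<partial>jdist w) \<partial>idx_pmf Q k)"
    unfolding alg_pmf_def nn_integral_pair_pmf' g_t_def
    by (simp add: power_mult_distrib ennreal_mult mult.commute nn_integral_cmult[symmetric])
  also have "\<dots> \<le> (\<integral>\<^sup>+I. ennreal ((norm (xt Q k x I))^2) * ennreal (4 * B^2) \<partial>idx_pmf Q k)"
    by (intro nn_integral_mono mult_left_mono nn_integral_jdist_phi_t_power2_le[OF w x y]) auto
  also have "\<dots> = ennreal (4 * B^2) * ennreal (\<integral>I. (norm (xt Q k x I))^2 \<partial>idx_pmf Q k)"
    by (subst nn_integral_eq_integral[symmetric])
       (auto simp: integrable_measure_pmf_finite[OF idx] nn_integral_cmult mult.commute)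
  also have "\<dots> \<le> ennreal (4 * B^2) * ennreal ((\<integral>i. (norm (xt_r Q x i))^2 \<partial>Q) / real k + 1)"
    by (intro mult_left_mono ennreal_leI integral_norm_xt_power2_le k x) auto
  also have "ennreal ((\<integral>i. (norm (xt_r Q x i))^2 \<partial>Q) / real k + 1)
      = (\<integral>\<^sup>+i. ennreal ((norm (xt_r Q x i))^2) \<partial>Q) / ennreal (real k) + 1"
    using k by (simp add: nn_integral_eq_integral integrable_measure_pmf_finite ennreal_plus
        divide_ennreal integral_nonneg_AE)
  finally show ?thesis .
qed

lemma borel_measurable_vec_nth_comp [measurable (raw)]:
  fixes f :: "'a \<Rightarrow> real^'n"
  shows "f \<in> borel_measurable M \<Longrightarrow> (\<lambda>x. f x $ j) \<in> borel_measurable M"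
  by (rule measurable_compose[OF _ borel_measurable_nth])

lemma borel_measurable_next_w [measurable (raw)]:
  assumes [measurable]: "f \<in> borel_measurable M" "g \<in> borel_measurable M" "h \<in> borel_measurable M"
  shows "(\<lambda>p. next_w B \<eta> Q k (f p) (g p) (h p) I j) \<in> borel_measurable M"
  unfolding next_w_def Let_def g_t_def phi_t_def pj_def xt_def xt_r_def
  by measurable

lemma borel_measurable_pmf_jdist [measurable (raw)]:
  assumes [measurable]: "f \<in> borel_measurable M"
  shows "(\<lambda>p. pmf (jdist (f p)) j) \<in> borel_measurable M"
proof -
  have "(\<lambda>p. pmf (jdist (f p)) j) = (\<lambda>p. if f p = 0 then pmf (jdist 0) j else (f p $ j)^2 / (norm (f p))^2)"
    by (auto simp: pmf_jdist pj_def)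
  also have "\<dots> \<in> borel_measurable M"
    by measurable
  finally show ?thesis .
qed

lemma norm_next_w_le: "B > 0 \<Longrightarrow> norm (next_w B \<eta> Q k w x y I j) \<le> B"
  unfolding next_w_def Let_def
  by (cases "norm (w - \<eta> *\<^sub>R g_t Q k w x y I j) \<le> B") (auto simp: max_def)

definition step_kernel :: "real \<Rightarrow> real \<Rightarrow> 'd::finite pmf \<Rightarrow> nat \<Rightarrow> real^'d \<Rightarrow> (real^'d) \<times> real
    \<Rightarrow> (real^'d) measure" where
  "step_kernel B \<eta> Q k w z =
     distr (measure_pmf (alg_pmf Q k w)) borel (\<lambda>(I, j). next_w B \<eta> Q k w (fst z) (snd z) I j)"

lemma step_eq_bind_step_kernel: "step D Q k \<eta> B w = D \<bind> step_kernel B \<eta> Q k w"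
  unfolding step_def step_kernel_def by (simp add: case_prod_beta')

lemma emeasure_step_kernel:
  fixes Q :: "'d::finite pmf"
  assumes "A \<in> sets borel"
  shows "emeasure (step_kernel B \<eta> Q k w z) A = (\<Sum>a\<in>set_pmf (idx_pmf Q k) \<times> UNIV.
      ennreal (pmf (idx_pmf Q k) (fst a) * pmf (jdist w) (snd a))
        * indicator A (next_w B \<eta> Q k w (fst z) (snd z) (fst a) (snd a)))"
proof -
  have idx: "finite (set_pmf (idx_pmf Q k))"
    unfolding idx_pmf_def by (rule finite_set_Pi_pmf_const) auto
  let ?f = "\<lambda>(I, j). next_w B \<eta> Q k w (fst z) (snd z) I j"
  have "emeasure (step_kernel B \<eta> Q k w z) A = (\<integral>\<^sup>+a. indicator (?f -` A) a \<partial>alg_pmf Q k w)"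
    unfolding step_kernel_def using assms by (subst emeasure_distr) auto
  also have "\<dots> = (\<Sum>a\<in>set_pmf (idx_pmf Q k) \<times> UNIV. indicator (?f -` A) a * ennreal (pmf (alg_pmf Q k w) a))"
    by (rule nn_integral_measure_pmf_support) (auto simp: idx alg_pmf_def)
  also have "\<dots> = (\<Sum>a\<in>set_pmf (idx_pmf Q k) \<times> UNIV.
      ennreal (pmf (idx_pmf Q k) (fst a) * pmf (jdist w) (snd a))
        * indicator A (next_w B \<eta> Q k w (fst z) (snd z) (fst a) (snd a)))"
    by (intro sum.cong refl) (auto simp: alg_pmf_def pmf_pair mult.commute split: split_indicator)
  finally show ?thesis .
qed

lemma measurable_step_kernel:
  fixes D :: "((real^'d::finite) \<times> real) measure" and Q :: "'d pmf"
  assumes D: "sets D = sets borel"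
  shows "(\<lambda>p. step_kernel B \<eta> Q k (fst p) (snd p)) \<in> borel \<Otimes>\<^sub>M D \<rightarrow>\<^sub>M subprob_algebra borel"
proof (rule measurable_subprob_algebra)
  fix p
  show "subprob_space (step_kernel B \<eta> Q k (fst p) (snd p))"
    unfolding step_kernel_def
    by (intro prob_space_imp_subprob_space prob_space.prob_space_distr) (auto simp: measure_pmf.prob_space_axioms)
  show "sets (step_kernel B \<eta> Q k (fst p) (snd p)) = sets borel"
    unfolding step_kernel_def by simp
next
  fix A :: "(real^'d) set"
  assume A [measurable]: "A \<in> sets borel"
  have "sets D = sets (borel \<Otimes>\<^sub>M borel)"
    unfolding borel_prod by (rule D)
  then show "(\<lambda>p. emeasure (step_kernel B \<eta> Q k (fst p) (snd p)) A) \<in> borel_measurable (borel \<Otimes>\<^sub>M D)"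
    unfolding emeasure_step_kernel[OF A] measurable_cong_sets[OF sets_pair_measure_cong[OF refl] refl]
    by measurable
qed

lemma measurable_step:
  fixes D :: "((real^'d::finite) \<times> real) measure" and Q :: "'d pmf"
  assumes D: "sets D = sets borel" and P: "prob_space D"
  shows "step D Q k \<eta> B \<in> borel \<rightarrow>\<^sub>M prob_algebra borel"
proof (rule measurable_prob_algebraI)
  have kernel: "step_kernel B \<eta> Q k w \<in> D \<rightarrow>\<^sub>M subprob_algebra borel" for w
    using measurable_Pair2[OF measurable_step_kernel[OF D], of w] by simp
  have "D \<in> space (subprob_algebra D)"
    using P by (simp add: space_subprob_algebra prob_space_imp_subprob_space)
  then show "step D Q k \<eta> B \<in> borel \<rightarrow>\<^sub>M subprob_algebra borel"
    unfolding step_eq_bind_step_kernel[abs_def]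
    by (rule measurable_bind[OF measurable_const]) (use measurable_step_kernel[OF D] in simp)
  show "prob_space (step D Q k \<eta> B w)" for w
    unfolding step_eq_bind_step_kernel
    by (rule prob_space.prob_space_bind[OF P _ kernel])
       (auto simp: step_kernel_def measure_pmf.prob_space_axioms intro!: AE_I2 prob_space.prob_space_distr)
qed

lemma w_law_in_prob_algebra:
  fixes D :: "((real^'d::finite) \<times> real) measure" and Q :: "'d pmf"
  assumes "sets D = sets borel" and "prob_space D"
  shows "w_law D Q k \<eta> B w1 n \<in> space (prob_algebra borel)"
proof (induction n)
  case 0
  show ?case
    by (simp add: measurable_space[OF measurable_return_prob_space])
next
  case (Suc n)
  then show ?case
    using prob_space_bind'[OF Suc measurable_step[OF assms]] sets_bind'[OF Suc measurable_step[OF assms]]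
    by (simp add: space_prob_algebra)
qed

lemma AE_w_law_norm_le:
  fixes D :: "((real^'d::finite) \<times> real) measure" and Q :: "'d pmf"
  assumes D: "sets D = sets borel" "prob_space D" and "B > 0" and "norm w1 \<le> B"
  shows "AE w in w_law D Q k \<eta> B w1 n. norm w \<le> B"
proof (cases n)
  case 0
  then show ?thesis
    unfolding 0 w_law.simps(1) using assms by (subst AE_return) auto
next
  case (Suc m)
  let ?M = "w_law D Q k \<eta> B w1 m"
  have norm_le [measurable]: "Measurable.pred borel (\<lambda>w::real^'d. norm w \<le> B)"
    by measurable
  have "sets ?M = sets borel"
    using w_law_in_prob_algebra[OF D] by (simp add: space_prob_algebra)
  then have step: "step D Q k \<eta> B \<in> ?M \<rightarrow>\<^sub>M subprob_algebra borel"
    using measurable_prob_algebraD[OF measurable_step[OF D]] by (simp cong: measurable_cong_sets)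
  have "AE y in step D Q k \<eta> B w. norm y \<le> B" for w
  proof -
    have kernel: "step_kernel B \<eta> Q k w \<in> D \<rightarrow>\<^sub>M subprob_algebra borel"
      using measurable_Pair2[OF measurable_step_kernel[OF D(1)], of w] by simp
    have "AE y in step_kernel B \<eta> Q k w z. norm y \<le> B" for z
      unfolding step_kernel_def using \<open>B > 0\<close> by (subst AE_distr_iff) (auto simp: norm_next_w_le)
    then show ?thesis
      unfolding step_eq_bind_step_kernel AE_bind[OF kernel norm_le] by (rule AE_I2)
  qed
  then show ?thesis
    unfolding Suc w_law.simps(2) by (subst AE_bind[OF step norm_le]) simp
qed

lemma borel_measurable_nn_integral_xt_r:
  fixes D :: "((real^'d::finite) \<times> real) measure" and Q :: "'d pmf"
  assumes "sets D = sets borel"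
  shows "(\<lambda>z. \<integral>\<^sup>+i. ennreal ((norm (xt_r Q (fst z) i))^2) \<partial>Q) \<in> borel_measurable D"
proof -
  have "sets D = sets (borel \<Otimes>\<^sub>M borel)"
    unfolding borel_prod by (rule assms)
  moreover have "(\<lambda>z. \<Sum>i\<in>UNIV. ennreal ((fst z $ i / pmf Q i)^2) * pmf Q i)
      \<in> borel_measurable (borel \<Otimes>\<^sub>M borel :: ((real^'d) \<times> real) measure)"
    by measurable
  ultimately show ?thesis
    by (simp add: nn_integral_measure_pmf_support[where A=UNIV] norm_xt_r_power2 cong: measurable_cong_sets)
qed

lemma nn_integral_data_norm_g_t_power2_le:
  fixes D :: "((real^'d::finite) \<times> real) measure" and Q :: "'d pmf"
  assumes D: "prob_space D" "sets D = sets borel" and z: "AE z in D. norm (fst z) \<le> 1 \<and> \<bar>snd z\<bar> \<le> B"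
    and w: "norm w \<le> B" and k: "k > 0"
  shows "(\<integral>\<^sup>+z. \<integral>\<^sup>+a. ennreal ((norm (g_t Q k w (fst z) (snd z) (fst a) (snd a)))^2) \<partial>alg_pmf Q k w \<partial>D)
    \<le> ennreal (4 * B^2) * ((\<integral>\<^sup>+z. \<integral>\<^sup>+i. ennreal ((norm (xt_r Q (fst z) i))^2) \<partial>Q \<partial>D) / ennreal (real k) + 1)"
proof -
  let ?X = "\<lambda>z. \<integral>\<^sup>+i. ennreal ((norm (xt_r Q (fst z) i))^2) \<partial>Q"
  have "(\<integral>\<^sup>+z. \<integral>\<^sup>+a. ennreal ((norm (g_t Q k w (fst z) (snd z) (fst a) (snd a)))^2) \<partial>alg_pmf Q k w \<partial>D)
      \<le> (\<integral>\<^sup>+z. ennreal (4 * B^2) * (?X z * inverse (ennreal (real k)) + 1) \<partial>D)"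
    using z by (intro nn_integral_mono_AE)
      (auto simp: divide_ennreal_def dest!: nn_integral_norm_g_t_power2_le[OF w _ _ k])
  also have "\<dots> = ennreal (4 * B^2) * ((\<integral>\<^sup>+z. ?X z \<partial>D) / ennreal (real k) + 1)"
    using borel_measurable_nn_integral_xt_r[OF D(2), of Q]
    by (simp add: nn_integral_cmult nn_integral_add nn_integral_multc divide_ennreal_def
        prob_space.emeasure_space_1[OF D(1)])
  finally show ?thesis .
qed

theorem lemma3:
  fixes D :: "((real^'d::finite) \<times> real) measure" and Q :: "'d pmf"
    and k :: nat and B \<eta> :: real and w1 :: "real^'d" and t r :: nat
  assumes "prob_space D" and "sets D = sets borel"
    and "AE z in D. norm (fst z) \<le> 1 \<and> \<bar>snd z\<bar> \<le> B"
    and "B > 0" and "\<eta> > 0" and "k > 0"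
    and "w1 \<noteq> 0" and "norm w1 \<le> B"
    and "t \<ge> 1" and "r < k"
  shows "(\<integral>\<^sup>+ w. \<integral>\<^sup>+ z. \<integral>\<^sup>+ a.
            ennreal ((norm (g_t Q k w (fst z) (snd z) (fst a) (snd a)))^2)
          \<partial>measure_pmf (alg_pmf Q k w) \<partial>D \<partial>w_law D Q k \<eta> B w1 (t - 1))
     \<le> ennreal (4 * B^2) *
        ((\<integral>\<^sup>+ w. \<integral>\<^sup>+ z. \<integral>\<^sup>+ a.
            ennreal ((norm (xt_r Q (fst z) (fst a r)))^2)
          \<partial>measure_pmf (alg_pmf Q k w) \<partial>D \<partial>w_law D Q k \<eta> B w1 (t - 1)) / ennreal (real k) + 1)"
proof -
  let ?M = "w_law D Q k \<eta> B w1 (t - 1)"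
  let ?c = "\<integral>\<^sup>+z. \<integral>\<^sup>+i. ennreal ((norm (xt_r Q (fst z) i))^2) \<partial>Q \<partial>D"
  have M: "prob_space ?M"
    using w_law_in_prob_algebra[OF assms(2,1)] by (simp add: space_prob_algebra)
  have "(\<integral>\<^sup>+ w. \<integral>\<^sup>+ z. \<integral>\<^sup>+ a. ennreal ((norm (g_t Q k w (fst z) (snd z) (fst a) (snd a)))^2)
          \<partial>measure_pmf (alg_pmf Q k w) \<partial>D \<partial>?M) \<le> (\<integral>\<^sup>+ w. ennreal (4 * B^2) * (?c / ennreal (real k) + 1) \<partial>?M)"
    using AE_w_law_norm_le[OF assms(2,1,4,8), of Q k \<eta> "t - 1"]
    by (intro nn_integral_mono_AE)
       (auto elim!: eventually_mono intro!: nn_integral_data_norm_g_t_power2_le[OF assms(1-3) _ assms(6)])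
  also have "\<dots> = ennreal (4 * B^2) * (?c / ennreal (real k) + 1)"
    using prob_space.emeasure_space_1[OF M] by simp
  also have "?c = (\<integral>\<^sup>+ w. \<integral>\<^sup>+ z. \<integral>\<^sup>+ a. ennreal ((norm (xt_r Q (fst z) (fst a r)))^2)
          \<partial>measure_pmf (alg_pmf Q k w) \<partial>D \<partial>?M)"
    using prob_space.emeasure_space_1[OF M] by (simp add: nn_integral_alg_pmf_xt_r[OF assms(10)])
  finally show ?thesis .
qed

end
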